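(* An FDS $A$ is cancellative, i.e. for all FDSs $B,C$ the equality $AB=AC$ implies $B=C$, if and only if $A$ has a fixpoint (a state $s\in S_A$ with $A(s)=s$).
   Context: A finite dynamical system (FDS) is a function $A:S_A\to S_A$ on a finite set $S_A$ (possibly empty). FDSs are considered up to isomorphism: $A=B$ means that their functional graphs (vertex set $S_A$, one arc $x\to A(x)$ for each $x$) are isomorphic digraphs. The product $AB$ of two FDSs is the function on $S_A\times S_B$ given by $(a,b)\mapsto (A(a),B(b))$. *)

theory Defs
  imports Main
begin

text \<open>A finite dynamical system is represented by a finite state set S together with
  a function f mapping S into S (values of f outside S are irrelevant).\<close>
definition is_fds :: "'a set \<Rightarrow> ('a \<Rightarrow> 'a) \<Rightarrow> bool" where
  "is_fds S f \<longleftrightarrow> finite S \<and> (\<forall>x\<in>S. f x \<in> S)"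

definition fds_iso :: "'a set \<Rightarrow> ('a \<Rightarrow> 'a) \<Rightarrow> 'b set \<Rightarrow> ('b \<Rightarrow> 'b) \<Rightarrow> bool" where
  "fds_iso S f T g \<longleftrightarrow> (\<exists>h. bij_betw h S T \<and> (\<forall>x\<in>S. h (f x) = g (h x)))"

definition fds_prod_set :: "'a set \<Rightarrow> 'b set \<Rightarrow> ('a \<times> 'b) set" where
  "fds_prod_set S T = S \<times> T"

definition fds_prod_fun :: "('a \<Rightarrow> 'a) \<Rightarrow> ('b \<Rightarrow> 'b) \<Rightarrow> ('a \<times> 'b \<Rightarrow> 'a \<times> 'b)" where
  "fds_prod_fun f g = (\<lambda>(a, b). (f a, g b))"

text \<open>Cancellative: for all FDSs B, C, AB = AC implies B = C. Every FDS is isomorphic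
  to one whose state set is a finite set of naturals, so B and C range over those.\<close>
definition cancellative :: "'a set \<Rightarrow> ('a \<Rightarrow> 'a) \<Rightarrow> bool" where
  "cancellative S f \<longleftrightarrow>
     (\<forall>(SB :: nat set) gB (SC :: nat set) gC.
        is_fds SB gB \<longrightarrow> is_fds SC gC \<longrightarrow>
        fds_iso (fds_prod_set S SB) (fds_prod_fun f gB) (fds_prod_set S SC) (fds_prod_fun f gC) \<longrightarrow>
        fds_iso SB gB SC gC)"

end

theory Submission
  imports Defs "HOL-Combinatorics.Orbits"
begin

(* If A has a fixpoint s, cancellation follows from Lovasz's counting argument: an FDS B is
  determined up to isomorphism by the numbers |Hom(Z, B)| over all FDSs Z; these numbers are
  multiplicative, |Hom(Z, AB)| = |Hom(Z, A)| |Hom(Z, B)|; and |Hom(Z, A)| > 0 because the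
  constant map to s is a homomorphism. For the first fact, sorting homomorphisms by their kernels
  expresses |Hom(Z, B)| through the numbers of injective homomorphisms from the quotients of Z,
  so equal counts give injective homomorphisms B -> C and C -> B.

  If A has no fixpoint, we construct B and C with AB = AC but with different numbers of
  fixpoints. A twist, i.e. a family of bijections h a : B -> C indexed by the states a of A with
  h (A a) o gB = gC o h a, yields the isomorphism (a, b) |-> (a, h a b) of AB and AC. Over the
  basin of a limit cycle of length l >= 2, the cycle itself twists into l fixpoints by reading
  off phases. Twists B1 -> C1 and B2 -> C2 over disjoint invariant parts U1, U2 combine into a
  twist B1 B2 + C1 C2 -> B1 C2 + C1 B2 over U1 + U2, and the fixpoint counts of these two
  systems differ by (b1 - c1)(b2 - c2), which is nonzero. *)


lemma fds_prod_fun_eq_map_prod: "fds_prod_fun f g = map_prod f g"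
  by (auto simp: fds_prod_fun_def)

lemma is_fds_prod: "is_fds S f \<Longrightarrow> is_fds T g \<Longrightarrow> is_fds (S \<times> T) (map_prod f g)"
  unfolding is_fds_def by auto

lemma is_fds_sum: "is_fds S f \<Longrightarrow> is_fds T g \<Longrightarrow> is_fds (S <+> T) (map_sum f g)"
  unfolding is_fds_def by auto

lemma fds_iso_sym:
  assumes "\<forall>x\<in>X. gx x \<in> X" and "fds_iso X gx Y gy"
  shows "fds_iso Y gy X gx"
proof -
  obtain p where p: "bij_betw p X Y" "\<forall>x\<in>X. p (gx x) = gy (p x)"
    using assms(2) unfolding fds_iso_def by blast
  have "inv_into X p (gy y) = gx (inv_into X p y)" if "y \<in> Y" for y
  proof -
    obtain x where "x \<in> X" "y = p x" using p(1) \<open>y \<in> Y\<close> by (auto simp: bij_betw_def)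
    then show ?thesis using p assms(1) by (metis bij_betw_inv_into_left)
  qed
  then show ?thesis unfolding fds_iso_def using bij_betw_inv_into[OF p(1)] by blast
qed

lemma ex_fds_iso_nat:
  assumes "is_fds B g"
  obtains N :: "nat set" and gN where "is_fds N gN" "fds_iso B g N gN"
proof -
  obtain e where e: "bij_betw e B {0..<card B}"
    using assms ex_bij_betw_finite_nat by (auto simp: is_fds_def)
  let ?gN = "\<lambda>n. e (g (inv_into B e n))"
  have "?gN n \<in> {0..<card B}" if "n \<in> {0..<card B}" for n
  proof -
    have "inv_into B e n \<in> B" using bij_betw_apply[OF bij_betw_inv_into[OF e] that] .
    then have "g (inv_into B e n) \<in> B" using assms by (simp add: is_fds_def)
    then show ?thesis by (rule bij_betw_apply[OF e])
  qed
  then have "is_fds {0..<card B} ?gN" by (simp add: is_fds_def)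
  moreover have "fds_iso B g {0..<card B} ?gN"
    unfolding fds_iso_def
  proof (intro exI conjI ballI)
    show "bij_betw e B {0..<card B}" by fact
    show "e (g b) = ?gN (e b)" if "b \<in> B" for b
      using bij_betw_inv_into_left[OF e that] by simp
  qed
  ultimately show ?thesis by (rule that)
qed

section \<open>Counting homomorphisms\<close>

definition fds_homs :: "'z set \<Rightarrow> ('z \<Rightarrow> 'z) \<Rightarrow> 'x set \<Rightarrow> ('x \<Rightarrow> 'x) \<Rightarrow> ('z \<Rightarrow> 'x) set" where
  "fds_homs Z gz X gx = {h \<in> Z \<rightarrow>\<^sub>E X. \<forall>z\<in>Z. h (gz z) = gx (h z)}"

definition fds_inj_homs :: "'z set \<Rightarrow> ('z \<Rightarrow> 'z) \<Rightarrow> 'x set \<Rightarrow> ('x \<Rightarrow> 'x) \<Rightarrow> ('z \<Rightarrow> 'x) set" where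
  "fds_inj_homs Z gz X gx = {h \<in> fds_homs Z gz X gx. inj_on h Z}"

lemma finite_fds_homs: "finite Z \<Longrightarrow> finite X \<Longrightarrow> finite (fds_homs Z gz X gx)"
  unfolding fds_homs_def by (rule finite_subset[OF _ finite_PiE]) auto

lemma finite_fds_inj_homs: "finite Z \<Longrightarrow> finite X \<Longrightarrow> finite (fds_inj_homs Z gz X gx)"
  unfolding fds_inj_homs_def by (rule finite_subset[OF _ finite_fds_homs]) auto

lemma fds_homs_eqI:
  assumes "h \<in> fds_homs Z gz X gx" "h' \<in> fds_homs Z gz X gx" "\<And>z. z \<in> Z \<Longrightarrow> h z = h' z"
  shows "h = h'"
  using assms unfolding fds_homs_def by (blast intro: PiE_ext)

lemma const_in_fds_homs:
  assumes "is_fds Z gz" "s \<in> X" "gx s = s"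
  shows "(\<lambda>z\<in>Z. s) \<in> fds_homs Z gz X gx"
  using assms unfolding fds_homs_def is_fds_def by auto

lemma restrict_id_in_fds_inj_homs: "is_fds X gx \<Longrightarrow> restrict id X \<in> fds_inj_homs X gx X gx"
  unfolding fds_inj_homs_def fds_homs_def is_fds_def by simp

lemma card_fds_inj_homs_self_pos:
  assumes "is_fds X gx"
  shows "0 < card (fds_inj_homs X gx X gx)"
proof -
  have "finite X" using assms by (simp add: is_fds_def)
  then have "finite (fds_inj_homs X gx X gx)" by (intro finite_fds_inj_homs)
  then show ?thesis using restrict_id_in_fds_inj_homs[OF assms] by (auto simp: card_gt_0_iff)
qed

lemma fds_iso_if_inj_homs:
  assumes X: "is_fds X gx" and Y: "is_fds Y gy"
    and "fds_inj_homs X gx Y gy \<noteq> {}" and "fds_inj_homs Y gy X gx \<noteq> {}"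
  shows "fds_iso X gx Y gy"
proof -
  obtain p where p: "inj_on p X" "p ` X \<subseteq> Y" "\<forall>x\<in>X. p (gx x) = gy (p x)"
    using assms(3) unfolding fds_inj_homs_def fds_homs_def by blast
  obtain q where q: "inj_on q Y" "q ` Y \<subseteq> X"
    using assms(4) unfolding fds_inj_homs_def fds_homs_def by blast
  have "card Y \<le> card X" using card_inj_on_le[OF q] X by (simp add: is_fds_def)
  then have "p ` X = Y"
    using p(1,2) Y by (metis card_image card_seteq is_fds_def)
  then show ?thesis unfolding fds_iso_def bij_betw_def using p by blast
qed

lemma card_fds_homs_le_if_embedding:
  assumes Z: "is_fds Z gz" and "finite Y"
    and p: "inj_on p X" "p ` X \<subseteq> Y" "\<forall>x\<in>X. p (gx x) = gy (p x)"
  shows "card (fds_homs Z gz X gx) \<le> card (fds_homs Z gz Y gy)"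
proof (rule card_inj_on_le)
  show "inj_on (\<lambda>h. \<lambda>z\<in>Z. p (h z)) (fds_homs Z gz X gx)"
  proof (rule inj_onI)
    fix h h' assume h: "h \<in> fds_homs Z gz X gx" "h' \<in> fds_homs Z gz X gx"
      and eq: "(\<lambda>z\<in>Z. p (h z)) = (\<lambda>z\<in>Z. p (h' z))"
    have "h z = h' z" if "z \<in> Z" for z
    proof -
      have "h z \<in> X" "h' z \<in> X" using h that unfolding fds_homs_def by auto
      moreover have "p (h z) = p (h' z)" using fun_cong[OF eq, of z] that by simp
      ultimately show ?thesis using p(1) by (simp add: inj_on_eq_iff)
    qed
    then show "h = h'" using h by (rule fds_homs_eqI[rotated 2])
  qed
  show "(\<lambda>h. \<lambda>z\<in>Z. p (h z)) ` fds_homs Z gz X gx \<subseteq> fds_homs Z gz Y gy"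
    using Z p(2,3) unfolding fds_homs_def is_fds_def by (auto simp: PiE_iff image_subset_iff)
  show "finite (fds_homs Z gz Y gy)"
    using Z \<open>finite Y\<close> by (simp add: finite_fds_homs is_fds_def)
qed

lemma card_fds_homs_eq_if_iso:
  assumes Z: "is_fds Z gz" and X: "is_fds X gx" and Y: "is_fds Y gy" and iso: "fds_iso X gx Y gy"
  shows "card (fds_homs Z gz X gx) = card (fds_homs Z gz Y gy)"
proof -
  obtain p where p: "bij_betw p X Y" "\<forall>x\<in>X. p (gx x) = gy (p x)"
    using iso unfolding fds_iso_def by blast
  obtain q where q: "bij_betw q Y X" "\<forall>y\<in>Y. q (gy y) = gx (q y)"
    using fds_iso_sym[OF _ iso] X unfolding fds_iso_def is_fds_def by blast
  show ?thesis
  proof (rule antisym)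
    show "card (fds_homs Z gz X gx) \<le> card (fds_homs Z gz Y gy)"
      using card_fds_homs_le_if_embedding[OF Z _ _ _ p(2)] p(1) Y
      by (simp add: bij_betw_def is_fds_def)
    show "card (fds_homs Z gz Y gy) \<le> card (fds_homs Z gz X gx)"
      using card_fds_homs_le_if_embedding[OF Z _ _ _ q(2)] q(1) X
      by (simp add: bij_betw_def is_fds_def)
  qed
qed

lemma pair_in_fds_homs:
  assumes "is_fds Z gz" "h1 \<in> fds_homs Z gz S f" "h2 \<in> fds_homs Z gz T g"
  shows "(\<lambda>z\<in>Z. (h1 z, h2 z)) \<in> fds_homs Z gz (S \<times> T) (map_prod f g)"
  using assms unfolding fds_homs_def is_fds_def by auto

lemma components_in_fds_homs:
  assumes Z: "is_fds Z gz" and h: "h \<in> fds_homs Z gz (S \<times> T) (map_prod f g)"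
  shows "(\<lambda>z\<in>Z. fst (h z)) \<in> fds_homs Z gz S f" "(\<lambda>z\<in>Z. snd (h z)) \<in> fds_homs Z gz T g"
proof -
  have "h z \<in> S \<times> T" "h (gz z) = map_prod f g (h z)" if "z \<in> Z" for z
    using h that unfolding fds_homs_def by auto
  then show "(\<lambda>z\<in>Z. fst (h z)) \<in> fds_homs Z gz S f" "(\<lambda>z\<in>Z. snd (h z)) \<in> fds_homs Z gz T g"
    using Z unfolding fds_homs_def is_fds_def by (auto simp: mem_Times_iff)
qed

lemma card_fds_homs_prod:
  assumes Z: "is_fds Z gz"
  shows "card (fds_homs Z gz (S \<times> T) (map_prod f g)) = card (fds_homs Z gz S f) * card (fds_homs Z gz T g)"
proof -
  let ?pair = "\<lambda>(h1, h2). \<lambda>z\<in>Z. (h1 z, h2 z)"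
  have inj: "inj_on ?pair (fds_homs Z gz S f \<times> fds_homs Z gz T g)"
  proof (rule inj_onI)
    fix p q assume p: "p \<in> fds_homs Z gz S f \<times> fds_homs Z gz T g"
      and q: "q \<in> fds_homs Z gz S f \<times> fds_homs Z gz T g" and eq: "?pair p = ?pair q"
    have agree: "fst p z = fst q z \<and> snd p z = snd q z" if "z \<in> Z" for z
      using fun_cong[OF eq, of z] that by (simp add: split_beta)
    have "fst p = fst q" using p q agree by (intro fds_homs_eqI[of _ Z gz S f]) auto
    moreover have "snd p = snd q" using p q agree by (intro fds_homs_eqI[of _ Z gz T g]) auto
    ultimately show "p = q" by (rule prod_eqI)
  qed
  have image: "?pair ` (fds_homs Z gz S f \<times> fds_homs Z gz T g) = fds_homs Z gz (S \<times> T) (map_prod f g)"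
  proof
    show "?pair ` (fds_homs Z gz S f \<times> fds_homs Z gz T g) \<subseteq> fds_homs Z gz (S \<times> T) (map_prod f g)"
      using pair_in_fds_homs[OF Z] by auto
    show "fds_homs Z gz (S \<times> T) (map_prod f g) \<subseteq> ?pair ` (fds_homs Z gz S f \<times> fds_homs Z gz T g)"
    proof
      fix h assume h: "h \<in> fds_homs Z gz (S \<times> T) (map_prod f g)"
      note components = components_in_fds_homs[OF Z h]
      have "h = ?pair (\<lambda>z\<in>Z. fst (h z), \<lambda>z\<in>Z. snd (h z))"
      proof (rule fds_homs_eqI[OF h])
        show "?pair (\<lambda>z\<in>Z. fst (h z), \<lambda>z\<in>Z. snd (h z)) \<in> fds_homs Z gz (S \<times> T) (map_prod f g)"
          using pair_in_fds_homs[OF Z components] by (simp only: prod.case)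
      qed simp
      then show "h \<in> ?pair ` (fds_homs Z gz S f \<times> fds_homs Z gz T g)"
        using components by blast
    qed
  qed
  show ?thesis
    using card_image[OF inj] unfolding image by (simp add: card_cartesian_product)
qed

definition kernel_homs :: "'z set \<Rightarrow> ('z \<Rightarrow> 'z) \<Rightarrow> ('z \<times> 'z) set \<Rightarrow> 'x set \<Rightarrow> ('x \<Rightarrow> 'x) \<Rightarrow> ('z \<Rightarrow> 'x) set" where
  "kernel_homs Z gz \<theta> X gx = {h \<in> fds_homs Z gz X gx. {(z, z') \<in> Z \<times> Z. h z = h z'} = \<theta>}"

lemma kernel_homsD:
  assumes "h \<in> kernel_homs Z gz \<theta> X gx"
  shows "h \<in> fds_homs Z gz X gx" "\<theta> \<subseteq> Z \<times> Z" "z \<in> Z \<Longrightarrow> z' \<in> Z \<Longrightarrow> (z, z') \<in> \<theta> \<longleftrightarrow> h z = h z'"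
  using assms unfolding kernel_homs_def by auto

lemma kernel_homsI:
  assumes "h \<in> fds_homs Z gz X gx" "\<theta> \<subseteq> Z \<times> Z"
    and "\<And>z z'. z \<in> Z \<Longrightarrow> z' \<in> Z \<Longrightarrow> (z, z') \<in> \<theta> \<longleftrightarrow> h z = h z'"
  shows "h \<in> kernel_homs Z gz \<theta> X gx"
  using assms unfolding kernel_homs_def by auto

lemma kernel_homs_Id_on: "kernel_homs Z gz (Id_on Z) X gx = fds_inj_homs Z gz X gx"
  unfolding fds_inj_homs_def inj_on_def by (auto intro: kernel_homsI dest: kernel_homsD)

lemma card_fds_homs_eq_sum_kernels:
  assumes "finite Z" "finite X"
  shows "card (fds_homs Z gz X gx) =
    card (fds_inj_homs Z gz X gx) + (\<Sum>\<theta>\<in>Pow (Z \<times> Z) - {Id_on Z}. card (kernel_homs Z gz \<theta> X gx))"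
proof -
  have "fds_homs Z gz X gx = (\<Union>\<theta>\<in>Pow (Z \<times> Z). kernel_homs Z gz \<theta> X gx)"
    unfolding kernel_homs_def by blast
  also have "card \<dots> = (\<Sum>\<theta>\<in>Pow (Z \<times> Z). card (kernel_homs Z gz \<theta> X gx))"
  proof (rule card_UN_disjoint)
    show "\<forall>\<theta>\<in>Pow (Z \<times> Z). finite (kernel_homs Z gz \<theta> X gx)"
      using finite_fds_homs[OF assms] unfolding kernel_homs_def by auto
  qed (auto simp: assms kernel_homs_def)
  also have "\<dots> = card (kernel_homs Z gz (Id_on Z) X gx)
      + (\<Sum>\<theta>\<in>Pow (Z \<times> Z) - {Id_on Z}. card (kernel_homs Z gz \<theta> X gx))"
    using assms by (intro sum.remove) auto
  finally show ?thesis by (simp add: kernel_homs_Id_on)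
qed

locale fds_congruence =
  fixes Z :: "'z set" and gz :: "'z \<Rightarrow> 'z" and \<theta> :: "('z \<times> 'z) set"
  assumes is_fds: "is_fds Z gz"
    and equiv: "equiv Z \<theta>"
    and compatible: "(z, z') \<in> \<theta> \<Longrightarrow> (gz z, gz z') \<in> \<theta>"

lemma fds_congruence_if_kernel_homs:
  assumes Z: "is_fds Z gz" and h: "h \<in> kernel_homs Z gz \<theta> X gx"
  shows "fds_congruence Z gz \<theta>"
proof
  have \<theta>: "\<theta> = {(z, z') \<in> Z \<times> Z. h z = h z'}" and hom: "\<forall>z\<in>Z. h (gz z) = gx (h z)"
    using h unfolding kernel_homs_def fds_homs_def by auto
  show "is_fds Z gz" by fact
  show "equiv Z \<theta>" unfolding \<theta> by (auto intro!: equivI refl_onI symI transI)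
  show "(gz z, gz z') \<in> \<theta>" if "(z, z') \<in> \<theta>" for z z'
    using that hom Z unfolding \<theta> is_fds_def by auto
qed

context fds_congruence
begin

definition rep :: "'z \<Rightarrow> 'z" where
  "rep z = (SOME w. w \<in> \<theta> `` {z})"

definition quotient_states :: "'z set" where
  "quotient_states = rep ` Z"

definition quotient_map :: "'z \<Rightarrow> 'z" where
  "quotient_map z = rep (gz z)"

lemma gz_in_states: "z \<in> Z \<Longrightarrow> gz z \<in> Z"
  using is_fds by (simp add: is_fds_def)

lemma related_in_states: "(z, z') \<in> \<theta> \<Longrightarrow> z \<in> Z \<and> z' \<in> Z"
  using equiv by (auto simp: equiv_def refl_on_def)

lemma rep_related: "z \<in> Z \<Longrightarrow> (z, rep z) \<in> \<theta>"
  using equiv unfolding rep_def equiv_def refl_on_def by (auto intro: someI)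

lemma rep_in_states: "z \<in> Z \<Longrightarrow> rep z \<in> Z"
  using rep_related related_in_states by blast

lemma rep_eq_iff:
  assumes "z \<in> Z" "z' \<in> Z"
  shows "rep z = rep z' \<longleftrightarrow> (z, z') \<in> \<theta>"
proof
  assume "rep z = rep z'"
  then show "(z, z') \<in> \<theta>"
    using rep_related[OF assms(1)] rep_related[OF assms(2)] equiv
    unfolding equiv_def by (metis symD transD)
next
  assume "(z, z') \<in> \<theta>"
  then have "\<theta> `` {z} = \<theta> `` {z'}" by (rule equiv_class_eq[OF equiv])
  then show "rep z = rep z'" unfolding rep_def by simp
qed

lemma rep_in_quotient_states: "z \<in> Z \<Longrightarrow> rep z \<in> quotient_states"
  unfolding quotient_states_def by (rule imageI)

lemma quotient_states_subset: "quotient_states \<subseteq> Z"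
  unfolding quotient_states_def using rep_in_states by blast

lemma rep_fixed:
  assumes "r \<in> quotient_states"
  shows "rep r = r"
proof -
  obtain z where z: "z \<in> Z" "r = rep z" using assms unfolding quotient_states_def by blast
  have "rep (rep z) = rep z"
    using rep_eq_iff[OF rep_in_states[OF z(1)] z(1)] rep_related[OF z(1)] equiv
    unfolding equiv_def by (metis symD)
  then show ?thesis using z(2) by simp
qed

lemma is_fds_quotient: "is_fds quotient_states quotient_map"
  using is_fds quotient_states_subset rep_in_quotient_states gz_in_states
  unfolding is_fds_def quotient_states_def quotient_map_def by auto

lemma card_quotient_states_less:
  assumes "\<theta> \<noteq> Id_on Z"
  shows "card quotient_states < card Z"
proof -
  have "finite Z" using is_fds by (simp add: is_fds_def)
  have "\<not> inj_on rep Z"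
  proof
    assume inj: "inj_on rep Z"
    have "\<theta> \<subseteq> Id_on Z"
    proof
      fix p assume "p \<in> \<theta>"
      then obtain z z' where p: "p = (z, z')" "(z, z') \<in> \<theta>" "z \<in> Z" "z' \<in> Z"
        using related_in_states by (cases p) auto
      then have "z = z'" using inj rep_eq_iff unfolding inj_on_def by blast
      then show "p \<in> Id_on Z" using p by (simp add: Id_onI)
    qed
    moreover have "Id_on Z \<subseteq> \<theta>" using equiv unfolding equiv_def refl_on_def by auto
    ultimately show False using assms by blast
  qed
  then have "card quotient_states \<noteq> card Z"
    unfolding quotient_states_def using eq_card_imp_inj_on[OF \<open>finite Z\<close>] by blast
  then show ?thesis
    using card_mono[OF \<open>finite Z\<close> quotient_states_subset] by simp
qed

lemma kernel_hom_rep: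
  assumes "h \<in> kernel_homs Z gz \<theta> W gW" "z \<in> Z"
  shows "h (rep z) = h z"
  using kernel_homsD(3)[OF assms(1) assms(2) rep_in_states[OF assms(2)]] rep_related[OF assms(2)]
  by simp

lemma restrict_kernel_hom_in_inj_homs:
  assumes h: "h \<in> kernel_homs Z gz \<theta> W gW"
  shows "restrict h quotient_states \<in> fds_inj_homs quotient_states quotient_map W gW"
proof -
  have hom: "h \<in> fds_homs Z gz W gW" using kernel_homsD(1)[OF h] .
  have "h (quotient_map r) = gW (h r)" if "r \<in> quotient_states" for r
  proof -
    have "r \<in> Z" using that quotient_states_subset by blast
    then have "h (quotient_map r) = h (gz r)"
      unfolding quotient_map_def using kernel_hom_rep[OF h] gz_in_states by blast
    then show ?thesis using hom \<open>r \<in> Z\<close> unfolding fds_homs_def by simp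
  qed
  moreover have "inj_on h quotient_states"
  proof (rule inj_onI)
    fix r r' assume r: "r \<in> quotient_states" "r' \<in> quotient_states" and "h r = h r'"
    then have "(r, r') \<in> \<theta>" using kernel_homsD(3)[OF h] quotient_states_subset by blast
    then show "r = r'" using rep_eq_iff rep_fixed r quotient_states_subset by (metis subsetD)
  qed
  moreover have "quotient_map r \<in> quotient_states" if "r \<in> quotient_states" for r
    using is_fds_quotient that by (simp add: is_fds_def)
  ultimately show ?thesis
    using hom quotient_states_subset
    unfolding fds_inj_homs_def fds_homs_def inj_on_def by auto
qed

lemma lift_in_kernel_homs:
  assumes g: "g \<in> fds_inj_homs quotient_states quotient_map W gW"
  shows "(\<lambda>z\<in>Z. g (rep z)) \<in> kernel_homs Z gz \<theta> W gW"
proof (rule kernel_homsI)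
  have g_hom: "\<And>r. r \<in> quotient_states \<Longrightarrow> g (quotient_map r) = gW (g r)"
    and g_in: "\<And>r. r \<in> quotient_states \<Longrightarrow> g r \<in> W"
    and g_inj: "inj_on g quotient_states"
    using g unfolding fds_inj_homs_def fds_homs_def by auto
  have "g (rep (gz z)) = gW (g (rep z))" if "z \<in> Z" for z
  proof -
    have "rep (gz z) = quotient_map (rep z)"
      unfolding quotient_map_def
      using rep_eq_iff compatible[OF rep_related[OF that]] gz_in_states rep_in_states that by blast
    then show ?thesis using g_hom rep_in_quotient_states that by simp
  qed
  then show "(\<lambda>z\<in>Z. g (rep z)) \<in> fds_homs Z gz W gW"
    unfolding fds_homs_def using g_in rep_in_quotient_states gz_in_states by auto
  show "\<theta> \<subseteq> Z \<times> Z" using related_in_states by auto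
  show "(z, z') \<in> \<theta> \<longleftrightarrow> (\<lambda>z\<in>Z. g (rep z)) z = (\<lambda>z\<in>Z. g (rep z)) z'" if "z \<in> Z" "z' \<in> Z" for z z'
  proof -
    have "g (rep z) = g (rep z') \<longleftrightarrow> rep z = rep z'"
      using inj_on_eq_iff[OF g_inj rep_in_quotient_states[OF that(1)] rep_in_quotient_states[OF that(2)]] .
    then show ?thesis using rep_eq_iff that by simp
  qed
qed

lemma card_kernel_homs:
  "card (kernel_homs Z gz \<theta> W gW) = card (fds_inj_homs quotient_states quotient_map W gW)"
proof -
  let ?lift = "\<lambda>g. \<lambda>z\<in>Z. g (rep z)"
  have inj: "inj_on ?lift (fds_inj_homs quotient_states quotient_map W gW)"
  proof (rule inj_onI)
    fix g g' assume g: "g \<in> fds_inj_homs quotient_states quotient_map W gW"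
      and g': "g' \<in> fds_inj_homs quotient_states quotient_map W gW" and eq: "?lift g = ?lift g'"
    have "g r = g' r" if "r \<in> quotient_states" for r
      using fun_cong[OF eq, of r] that rep_fixed quotient_states_subset by auto
    then show "g = g'" using g g' unfolding fds_inj_homs_def by (blast intro: fds_homs_eqI)
  qed
  have image: "?lift ` fds_inj_homs quotient_states quotient_map W gW = kernel_homs Z gz \<theta> W gW"
  proof
    show "?lift ` fds_inj_homs quotient_states quotient_map W gW \<subseteq> kernel_homs Z gz \<theta> W gW"
      using lift_in_kernel_homs by blast
    show "kernel_homs Z gz \<theta> W gW \<subseteq> ?lift ` fds_inj_homs quotient_states quotient_map W gW"
    proof
      fix h assume h: "h \<in> kernel_homs Z gz \<theta> W gW"
      note g = restrict_kernel_hom_in_inj_homs[OF h]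
      have "h = ?lift (restrict h quotient_states)"
      proof (rule fds_homs_eqI)
        show "h \<in> fds_homs Z gz W gW" using kernel_homsD(1)[OF h] .
        show "?lift (restrict h quotient_states) \<in> fds_homs Z gz W gW"
          using kernel_homsD(1)[OF lift_in_kernel_homs[OF g]] .
        show "h z = ?lift (restrict h quotient_states) z" if "z \<in> Z" for z
          using that kernel_hom_rep[OF h] rep_in_quotient_states by simp
      qed
      then show "h \<in> ?lift ` fds_inj_homs quotient_states quotient_map W gW"
        using g by blast
    qed
  qed
  show ?thesis using card_image[OF inj] unfolding image by simp
qed

end

lemma card_fds_inj_homs_eq_if_card_homs_eq:
  fixes X Y :: "'x set" and Z :: "nat set"
  assumes X: "is_fds X gx" and Y: "is_fds Y gy"
    and homs_eq: "\<And>(Z' :: nat set) gz'. is_fds Z' gz' \<Longrightarrow>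
      card (fds_homs Z' gz' X gx) = card (fds_homs Z' gz' Y gy)"
    and "is_fds Z gz"
  shows "card (fds_inj_homs Z gz X gx) = card (fds_inj_homs Z gz Y gy)"
  using \<open>is_fds Z gz\<close>
proof (induction "card Z" arbitrary: Z gz rule: less_induct)
  case less
  have kernels_eq: "card (kernel_homs Z gz \<theta> X gx) = card (kernel_homs Z gz \<theta> Y gy)"
    if "\<theta> \<in> Pow (Z \<times> Z) - {Id_on Z}" for \<theta>
  proof (cases "fds_congruence Z gz \<theta>")
    case True
    then interpret fds_congruence Z gz \<theta> .
    have "card quotient_states < card Z" using that card_quotient_states_less by blast
    then show ?thesis using less.hyps is_fds_quotient by (simp add: card_kernel_homs)
  next
    case False
    then have "kernel_homs Z gz \<theta> W gW = {}" for W :: "'x set" and gW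
      using fds_congruence_if_kernel_homs[OF less.prems] by blast
    then show ?thesis by simp
  qed
  have fin: "finite Z" "finite X" "finite Y" using less.prems X Y by (auto simp: is_fds_def)
  have "(\<Sum>\<theta>\<in>Pow (Z \<times> Z) - {Id_on Z}. card (kernel_homs Z gz \<theta> X gx))
      = (\<Sum>\<theta>\<in>Pow (Z \<times> Z) - {Id_on Z}. card (kernel_homs Z gz \<theta> Y gy))"
    using kernels_eq by (rule sum.cong[OF refl])
  then show ?case
    using card_fds_homs_eq_sum_kernels[OF fin(1,2), of gz gx]
      card_fds_homs_eq_sum_kernels[OF fin(1,3), of gz gy] homs_eq[OF less.prems] by linarith
qed

lemma fds_iso_if_card_homs_eq:
  fixes X Y :: "nat set"
  assumes X: "is_fds X gx" and Y: "is_fds Y gy"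
    and homs_eq: "\<And>(Z :: nat set) gz. is_fds Z gz \<Longrightarrow>
      card (fds_homs Z gz X gx) = card (fds_homs Z gz Y gy)"
  shows "fds_iso X gx Y gy"
proof (rule fds_iso_if_inj_homs[OF X Y])
  have "0 < card (fds_inj_homs X gx X gx)" "0 < card (fds_inj_homs Y gy Y gy)"
    using X Y by (simp_all add: card_fds_inj_homs_self_pos)
  moreover have "card (fds_inj_homs X gx X gx) = card (fds_inj_homs X gx Y gy)"
    "card (fds_inj_homs Y gy X gx) = card (fds_inj_homs Y gy Y gy)"
    using card_fds_inj_homs_eq_if_card_homs_eq[OF X Y homs_eq X]
      card_fds_inj_homs_eq_if_card_homs_eq[OF X Y homs_eq Y] by simp_all
  ultimately show "fds_inj_homs X gx Y gy \<noteq> {}" "fds_inj_homs Y gy X gx \<noteq> {}" by auto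
qed

lemma cancellative_if_fixpoint:
  assumes A: "is_fds S f" and s: "s \<in> S" "f s = s"
  shows "cancellative S f"
  unfolding cancellative_def fds_prod_set_def fds_prod_fun_eq_map_prod
proof (intro allI impI)
  fix B :: "nat set" and gB and C :: "nat set" and gC
  assume B: "is_fds B gB" and C: "is_fds C gC"
    and iso: "fds_iso (S \<times> B) (map_prod f gB) (S \<times> C) (map_prod f gC)"
  show "fds_iso B gB C gC"
  proof (rule fds_iso_if_card_homs_eq[OF B C])
    fix Z :: "nat set" and gz assume Z: "is_fds Z gz"
    have "card (fds_homs Z gz S f) * card (fds_homs Z gz B gB)
        = card (fds_homs Z gz S f) * card (fds_homs Z gz C gC)"
      using card_fds_homs_eq_if_iso[OF Z is_fds_prod[OF A B] is_fds_prod[OF A C] iso]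
      by (simp add: card_fds_homs_prod[OF Z])
    moreover have "card (fds_homs Z gz S f) \<noteq> 0"
      using const_in_fds_homs[of Z gz s S f] Z s A by (auto simp: finite_fds_homs is_fds_def)
    ultimately show "card (fds_homs Z gz B gB) = card (fds_homs Z gz C gC)" by simp
  qed
qed

section \<open>Fixpoint counts and twists\<close>

definition fixpoint_count :: "'b set \<Rightarrow> ('b \<Rightarrow> 'b) \<Rightarrow> nat" where
  "fixpoint_count B g = card {b \<in> B. g b = b}"

lemma fixpoint_count_iso:
  assumes B: "is_fds B gB" and iso: "fds_iso B gB C gC"
  shows "fixpoint_count B gB = fixpoint_count C gC"
proof -
  obtain p where p: "bij_betw p B C" "\<forall>b\<in>B. p (gB b) = gC (p b)"
    using iso unfolding fds_iso_def by blast
  have "inj_on p B" using p(1) by (simp add: bij_betw_def)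
  have image: "p ` {b \<in> B. gB b = b} = {c \<in> C. gC c = c}"
  proof
    show "p ` {b \<in> B. gB b = b} \<subseteq> {c \<in> C. gC c = c}"
      using p by (auto simp: bij_betw_def)
    show "{c \<in> C. gC c = c} \<subseteq> p ` {b \<in> B. gB b = b}"
    proof
      fix c assume c: "c \<in> {c \<in> C. gC c = c}"
      then obtain b where b: "b \<in> B" "c = p b" using p(1) by (auto simp: bij_betw_def)
      have "p (gB b) = p b" using p(2) b c by auto
      then have "gB b = b" using \<open>inj_on p B\<close> B b(1) by (simp add: inj_on_eq_iff is_fds_def)
      then show "c \<in> p ` {b \<in> B. gB b = b}" using b by blast
    qed
  qed
  have "inj_on p {b \<in> B. gB b = b}" using \<open>inj_on p B\<close> by (rule inj_on_subset) auto
  then show ?thesis unfolding fixpoint_count_def using card_image image by fastforce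
qed

lemma fixpoint_count_prod:
  "fixpoint_count (B \<times> C) (map_prod gB gC) = fixpoint_count B gB * fixpoint_count C gC"
proof -
  have "{x \<in> B \<times> C. map_prod gB gC x = x} = {b \<in> B. gB b = b} \<times> {c \<in> C. gC c = c}" by auto
  then show ?thesis unfolding fixpoint_count_def by (simp add: card_cartesian_product)
qed

lemma fixpoint_count_sum:
  assumes "finite B" "finite C"
  shows "fixpoint_count (B <+> C) (map_sum gB gC) = fixpoint_count B gB + fixpoint_count C gC"
proof -
  have "{x \<in> B <+> C. map_sum gB gC x = x} = {b \<in> B. gB b = b} <+> {c \<in> C. gC c = c}" by auto
  then show ?thesis unfolding fixpoint_count_def using assms by (simp add: card_Plus)
qed

lemma bij_betw_map_sum:
  assumes "bij_betw f A C" "bij_betw g B D"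
  shows "bij_betw (map_sum f g) (A <+> B) (C <+> D)"
  unfolding bij_betw_def
proof
  show "inj_on (map_sum f g) (A <+> B)"
  proof (rule inj_onI)
    fix x y assume "x \<in> A <+> B" "y \<in> A <+> B" "map_sum f g x = map_sum f g y"
    then show "x = y"
      using assms by (auto simp: bij_betw_def inj_on_eq_iff)
  qed
  have "map_sum f g ` (A <+> B) = f ` A <+> g ` B"
    by (simp add: Plus_def image_Un image_image)
  then show "map_sum f g ` (A <+> B) = C <+> D"
    using assms by (simp add: bij_betw_def)
qed

definition twist :: "'a set \<Rightarrow> ('a \<Rightarrow> 'a) \<Rightarrow> 'b set \<Rightarrow> ('b \<Rightarrow> 'b) \<Rightarrow> 'c set \<Rightarrow> ('c \<Rightarrow> 'c) \<Rightarrow> ('a \<Rightarrow> 'b \<Rightarrow> 'c) \<Rightarrow> bool" where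
  "twist U f B gB C gC h \<longleftrightarrow> (\<forall>a\<in>U. bij_betw (h a) B C \<and> (\<forall>b\<in>B. h (f a) (gB b) = gC (h a b)))"

lemma fds_iso_prod_if_twist:
  assumes "twist U f B gB C gC h"
  shows "fds_iso (U \<times> B) (map_prod f gB) (U \<times> C) (map_prod f gC)"
proof -
  have bij: "\<And>a. a \<in> U \<Longrightarrow> bij_betw (h a) B C"
    and comm: "\<And>a b. a \<in> U \<Longrightarrow> b \<in> B \<Longrightarrow> h (f a) (gB b) = gC (h a b)"
    using assms unfolding twist_def by auto
  let ?k = "\<lambda>(a, b). (a, h a b)"
  have "inj_on ?k (U \<times> B)"
    using bij by (auto simp: inj_on_def bij_betw_def)
  moreover have "?k ` (U \<times> B) = U \<times> C"
  proof
    show "?k ` (U \<times> B) \<subseteq> U \<times> C" using bij by (auto dest: bij_betw_apply)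
    show "U \<times> C \<subseteq> ?k ` (U \<times> B)"
    proof (clarify)
      fix a c assume "a \<in> U" "c \<in> C"
      then obtain b where "b \<in> B" "c = h a b" using bij by (metis bij_betw_def imageE)
      then show "(a, c) \<in> ?k ` (U \<times> B)" using \<open>a \<in> U\<close> by (auto intro: image_eqI[of _ _ "(a, b)"])
    qed
  qed
  moreover have "\<forall>x\<in>U \<times> B. ?k (map_prod f gB x) = map_prod f gC (?k x)"
    using comm by auto
  ultimately show ?thesis unfolding fds_iso_def bij_betw_def by blast
qed

lemma twist_const:
  assumes "bij_betw e B C" "\<forall>b\<in>B. e (gB b) = gC (e b)"
  shows "twist U f B gB C gC (\<lambda>_. e)"
  using assms by (simp add: twist_def)

lemma twist_comp:
  assumes h: "twist U f B gB C gC h" and k: "twist U f C gC D gD k"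
  shows "twist U f B gB D gD (\<lambda>a. k a \<circ> h a)"
  unfolding twist_def
proof (intro ballI conjI)
  fix a assume a: "a \<in> U"
  then have "bij_betw (h a) B C" "bij_betw (k a) C D" using h k by (auto simp: twist_def)
  then show "bij_betw (k a \<circ> h a) B D" by (rule bij_betw_trans)
  fix b assume "b \<in> B"
  then have "h a b \<in> C" by (rule bij_betw_apply[OF \<open>bij_betw (h a) B C\<close>])
  then show "(k (f a) \<circ> h (f a)) (gB b) = gD ((k a \<circ> h a) b)"
    using h k a \<open>b \<in> B\<close> by (simp add: twist_def)
qed

lemma twist_inv:
  assumes h: "twist U f B gB C gC h"
    and U: "\<forall>a\<in>U. f a \<in> U" and B: "\<forall>b\<in>B. gB b \<in> B"
  shows "twist U f C gC B gB (\<lambda>a. inv_into B (h a))"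
  unfolding twist_def
proof (intro ballI conjI)
  fix a assume a: "a \<in> U"
  then have bij: "bij_betw (h a) B C" and bij_f: "bij_betw (h (f a)) B C"
    using h U by (auto simp: twist_def)
  show "bij_betw (inv_into B (h a)) C B" using bij by (rule bij_betw_inv_into)
  fix c assume "c \<in> C"
  define b where "b = inv_into B (h a) c"
  have b: "b \<in> B" "h a b = c"
    unfolding b_def using bij_betw_apply[OF bij_betw_inv_into[OF bij] \<open>c \<in> C\<close>]
      bij_betw_inv_into_right[OF bij \<open>c \<in> C\<close>] by auto
  then have "h (f a) (gB b) = gC c" using h a by (auto simp: twist_def)
  then show "inv_into B (h (f a)) (gC c) = gB (inv_into B (h a) c)"
    using bij_f B b(1) unfolding b_def[symmetric] by (metis bij_betw_inv_into_left)
qed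

lemma twist_prod_right:
  assumes "twist U f B gB C gC h"
  shows "twist U f (B \<times> D) (map_prod gB gD) (C \<times> D) (map_prod gC gD) (\<lambda>a. map_prod (h a) id)"
  using assms by (auto simp: twist_def intro: bij_betw_map_prod)

lemma twist_prod_left:
  assumes "twist U f B gB C gC h"
  shows "twist U f (D \<times> B) (map_prod gD gB) (D \<times> C) (map_prod gD gC) (\<lambda>a. map_prod id (h a))"
  using assms by (auto simp: twist_def intro: bij_betw_map_prod)

lemma twist_sum:
  assumes "twist U f B gB C gC h" "twist U f B' gB' C' gC' h'"
  shows "twist U f (B <+> B') (map_sum gB gB') (C <+> C') (map_sum gC gC') (\<lambda>a. map_sum (h a) (h' a))"
  using assms by (auto simp: twist_def intro: bij_betw_map_sum)

lemma twist_sum_swap: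
  "twist U f (B <+> C) (map_sum gB gC) (C <+> B) (map_sum gC gB) (\<lambda>_. case_sum Inr Inl)"
proof (rule twist_const)
  show "bij_betw (case_sum Inr Inl) (B <+> C) (C <+> B)"
    by (rule bij_betwI[where g = "case_sum Inr Inl"]) auto
qed auto

lemma twist_Un:
  assumes "twist U1 f B gB C gC h1" "twist U2 f B gB C gC h2"
    and "\<forall>a\<in>U1. f a \<in> U1" "\<forall>a\<in>U2. f a \<in> U2" "U1 \<inter> U2 = {}"
  shows "twist (U1 \<union> U2) f B gB C gC (\<lambda>a. if a \<in> U1 then h1 a else h2 a)"
proof -
  have "f a \<notin> U1" if "a \<in> U2" for a using assms(4,5) that by blast
  then show ?thesis using assms(1-3) unfolding twist_def by auto
qed

lemma twist_transport:
  assumes "twist U f B gB C gC h" "fds_iso B' gB' B gB" "fds_iso C gC C' gC'"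
  obtains h' where "twist U f B' gB' C' gC' h'"
proof -
  obtain p q where "bij_betw p B' B" "\<forall>b\<in>B'. p (gB' b) = gB (p b)"
    "bij_betw q C C'" "\<forall>c\<in>C. q (gC c) = gC' (q c)"
    using assms(2,3) unfolding fds_iso_def by blast
  then have "twist U f B' gB' C' gC' (\<lambda>a. q \<circ> (h a \<circ> p))"
    using twist_comp[OF twist_comp[OF twist_const assms(1)] twist_const] by blast
  then show ?thesis by (rule that)
qed

section \<open>Limit cycles\<close>

lemma funpow_in_fds: "is_fds U f \<Longrightarrow> x \<in> U \<Longrightarrow> (f ^^ n) x \<in> U"
  by (induction n) (auto simp: is_fds_def)

lemma funpow_funpow: "(f ^^ m) ((f ^^ n) x) = (f ^^ (m + n)) x"
  by (simp add: funpow_add)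

lemma funpow_card_in_own_orbit:
  assumes U: "is_fds U f" and x: "x \<in> U"
  shows "(f ^^ card U) x \<in> orbit f ((f ^^ card U) x)"
proof -
  let ?K = "card U"
  have "\<not> inj_on (\<lambda>i. (f ^^ i) x) {0..?K}"
  proof
    assume inj: "inj_on (\<lambda>i. (f ^^ i) x) {0..?K}"
    have "(\<lambda>i. (f ^^ i) x) ` {0..?K} \<subseteq> U" using funpow_in_fds[OF U x] by blast
    then have "card {0..?K} \<le> ?K" using card_inj_on_le[OF inj] U by (simp add: is_fds_def)
    then show False by simp
  qed
  then obtain m n where mn: "m \<le> ?K" "n \<le> ?K" "m \<noteq> n" "(f ^^ m) x = (f ^^ n) x"
    unfolding inj_on_def by auto
  define i j where "i = min m n" and "j = max m n"
  have ij: "i < j" "j \<le> ?K" "(f ^^ i) x = (f ^^ j) x"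
    using mn unfolding i_def j_def by (auto simp: min_def max_def)
  have exps: "j - i + ?K = ?K - i + j" "?K - i + i = ?K" using ij(1,2) by simp_all
  have "(f ^^ (j - i)) ((f ^^ ?K) x) = (f ^^ (?K - i)) ((f ^^ j) x)"
    by (simp only: funpow_funpow exps(1))
  also have "\<dots> = (f ^^ ?K) x"
    by (simp only: ij(3)[symmetric] funpow_funpow exps(2))
  finally show ?thesis
    unfolding orbit_altdef using ij(1) by (intro CollectI exI[of _ "j - i"]) simp
qed

definition limit_cycle :: "'a set \<Rightarrow> ('a \<Rightarrow> 'a) \<Rightarrow> 'a \<Rightarrow> 'a set" where
  "limit_cycle U f x = orbit f ((f ^^ card U) x)"

lemma funpow_card_in_limit_cycle:
  "is_fds U f \<Longrightarrow> x \<in> U \<Longrightarrow> (f ^^ card U) x \<in> limit_cycle U f x"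
  unfolding limit_cycle_def by (rule funpow_card_in_own_orbit)

lemma cyclic_on_limit_cycle:
  assumes "is_fds U f" "x \<in> U"
  shows "cyclic_on f (limit_cycle U f x)"
  using funpow_card_in_limit_cycle[OF assms] by (rule cyclic_on_singleI) (simp add: limit_cycle_def)

lemma limit_cycle_subset:
  assumes "is_fds U f" "x \<in> U"
  shows "limit_cycle U f x \<subseteq> U"
proof
  fix y assume "y \<in> limit_cycle U f x"
  then obtain n where "y = (f ^^ n) ((f ^^ card U) x)"
    unfolding limit_cycle_def orbit_altdef by blast
  then show "y \<in> U" using funpow_in_fds[OF assms(1) funpow_in_fds[OF assms]] by simp
qed

lemma limit_cycle_step:
  assumes "is_fds U f" "x \<in> U"
  shows "limit_cycle U f (f x) = limit_cycle U f x"
proof -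
  have "(f ^^ card U) (f x) = f ((f ^^ card U) x)" by (simp add: funpow_swap1)
  then show ?thesis
    unfolding limit_cycle_def using self_in_orbit_step[OF funpow_card_in_own_orbit[OF assms]] by simp
qed

lemma inj_on_cyclic_on:
  assumes "cyclic_on f C"
  shows "inj_on f C"
proof (rule finite_surj_inj)
  show "finite C" using assms by (rule finite_cyclic_on)
  obtain s where "s \<in> C" "C = orbit f s" using assms unfolding cyclic_on_def by blast
  show "C \<subseteq> f ` C"
  proof
    fix y assume "y \<in> C"
    then have "y \<in> orbit f s" using \<open>C = orbit f s\<close> by simp
    then show "y \<in> f ` C"
    proof (cases rule: orbit.cases)
      case base
      then show ?thesis using \<open>s \<in> C\<close> by (rule image_eqI)
    next
      case (step z)
      then show ?thesis using \<open>C = orbit f s\<close> by (intro image_eqI[of _ _ z]) simp_all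
    qed
  qed
qed

lemma funpow_dist_shift:
  assumes C: "cyclic_on f C" and q: "q \<in> C" and y: "y \<in> C"
  shows "funpow_dist f (f q) (f y) = funpow_dist f q y"
proof (rule antisym)
  have "y \<in> orbit f q" using orbit_cyclic_eq3[OF C q] y by simp
  then have "(f ^^ funpow_dist f q y) q = y" by (rule funpow_dist_prop)
  then have "(f ^^ funpow_dist f q y) (f q) = f y"
    using funpow_swap1[of f "funpow_dist f q y" q] by simp
  then show "funpow_dist f (f q) (f y) \<le> funpow_dist f q y"
    unfolding funpow_dist_def by (rule Least_le)
  have "f y \<in> orbit f (f q)"
    using orbit_cyclic_eq3[OF C cyclic_on_inI[OF C q]] cyclic_on_inI[OF C y] by simp
  then have "(f ^^ funpow_dist f (f q) (f y)) (f q) = f y" by (rule funpow_dist_prop)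
  then have "f ((f ^^ funpow_dist f (f q) (f y)) q) = f y"
    using funpow_swap1[of f "funpow_dist f (f q) (f y)" q] by simp
  then have "(f ^^ funpow_dist f (f q) (f y)) q = y"
    using inj_on_cyclic_on[OF C] cyclic_on_funpow_in[OF C q] y by (simp add: inj_on_eq_iff)
  then show "funpow_dist f q y \<le> funpow_dist f (f q) (f y)"
    unfolding funpow_dist_def by (rule Least_le)
qed

lemma bij_betw_funpow_dist:
  assumes C: "cyclic_on f C" and q: "q \<in> C"
  shows "bij_betw (funpow_dist f q) C {0..<card C}"
proof -
  have orb: "orbit f q = C" using orbit_cyclic_eq3[OF C q] .
  have fin: "finite C" using C by (rule finite_cyclic_on)
  have inj: "inj_on (funpow_dist f q) C"
  proof (rule inj_onI)
    fix y y' assume "y \<in> C" "y' \<in> C" and eq: "funpow_dist f q y = funpow_dist f q y'"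
    then have "y \<in> orbit f q" "y' \<in> orbit f q" using orb by simp_all
    then show "y = y'" using funpow_dist_prop eq by metis
  qed
  have sub: "funpow_dist f q ` C \<subseteq> {0..<card C}"
  proof
    fix n assume "n \<in> funpow_dist f q ` C"
    then obtain y where y: "y \<in> C" "n = funpow_dist f q y" by blast
    have "y \<in> orbit f q" using y(1) orb by simp
    then have "inj_on (\<lambda>m. (f ^^ m) q) {0..n}" unfolding y(2) by (rule inj_on_funpow_dist)
    moreover have "(\<lambda>m. (f ^^ m) q) ` {0..n} \<subseteq> C" using cyclic_on_funpow_in[OF C q] by blast
    ultimately have "card {0..n} \<le> card C" using fin by (rule card_inj_on_le)
    then show "n \<in> {0..<card C}" by simp
  qed
  have "funpow_dist f q ` C = {0..<card C}"
    using card_subset_eq[OF _ sub] card_image[OF inj] by simp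
  then show ?thesis using inj by (simp add: bij_betw_def)
qed

lemma twist_limit_cycle_basin:
  assumes U: "is_fds U f" and a: "a \<in> U"
  defines "C \<equiv> limit_cycle U f a"
  shows "twist {x \<in> U. limit_cycle U f x = C} f C f {0..<card C} id (\<lambda>x. funpow_dist f ((f ^^ card U) x))"
  unfolding twist_def
proof (intro ballI conjI)
  have cyc: "cyclic_on f C" unfolding C_def using U a by (rule cyclic_on_limit_cycle)
  fix x assume x: "x \<in> {x \<in> U. limit_cycle U f x = C}"
  then have q: "(f ^^ card U) x \<in> C" using funpow_card_in_limit_cycle[OF U] by auto
  show "bij_betw (funpow_dist f ((f ^^ card U) x)) C {0..<card C}"
    using cyc q by (rule bij_betw_funpow_dist)
  fix y assume "y \<in> C"
  have "(f ^^ card U) (f x) = f ((f ^^ card U) x)" by (simp add: funpow_swap1)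
  then show "funpow_dist f ((f ^^ card U) (f x)) (f y) = id (funpow_dist f ((f ^^ card U) x) y)"
    using funpow_dist_shift[OF cyc q \<open>y \<in> C\<close>] by simp
qed

section \<open>Systems without fixpoints are not cancellative\<close>

lemma add_mult_cross_neq:
  fixes b1 c1 b2 c2 :: nat
  assumes "b1 \<noteq> c1" "b2 \<noteq> c2"
  shows "b1 * b2 + c1 * c2 \<noteq> b1 * c2 + c1 * b2"
proof
  assume "b1 * b2 + c1 * c2 = b1 * c2 + c1 * b2"
  then have "(int b1 - int c1) * (int b2 - int c2) = 0"
    by (simp add: algebra_simps flip: of_nat_mult of_nat_add)
  then show False using assms by simp
qed

definition has_separating_twist :: "'a set \<Rightarrow> ('a \<Rightarrow> 'a) \<Rightarrow> bool" where
  "has_separating_twist U f \<longleftrightarrow> (\<exists>(B :: nat set) gB (C :: nat set) gC h.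
     is_fds B gB \<and> is_fds C gC \<and> twist U f B gB C gC h \<and> fixpoint_count B gB \<noteq> fixpoint_count C gC)"

lemma has_separating_twistI:
  assumes B: "is_fds B gB" and C: "is_fds C gC" and h: "twist U f B gB C gC h"
    and ne: "fixpoint_count B gB \<noteq> fixpoint_count C gC"
  shows "has_separating_twist U f"
proof -
  obtain B' :: "nat set" and gB' where B': "is_fds B' gB'" "fds_iso B gB B' gB'"
    using ex_fds_iso_nat[OF B] .
  obtain C' :: "nat set" and gC' where C': "is_fds C' gC'" "fds_iso C gC C' gC'"
    using ex_fds_iso_nat[OF C] .
  have "fds_iso B' gB' B gB" using fds_iso_sym[OF _ B'(2)] B by (simp add: is_fds_def)
  then obtain h' where "twist U f B' gB' C' gC' h'" using twist_transport[OF h _ C'(2)] by blast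
  moreover have "fixpoint_count B' gB' \<noteq> fixpoint_count C' gC'"
    using ne fixpoint_count_iso[OF B B'(2)] fixpoint_count_iso[OF C C'(2)] by simp
  ultimately show ?thesis using B'(1) C'(1) unfolding has_separating_twist_def by blast
qed

lemma has_separating_twist_empty: "has_separating_twist {} f"
proof (rule has_separating_twistI)
  show "is_fds ({} :: nat set) id" "is_fds {0 :: nat} id" by (simp_all add: is_fds_def)
  show "twist {} f ({} :: nat set) id {0 :: nat} id (\<lambda>_. id)" by (simp add: twist_def)
  show "fixpoint_count ({} :: nat set) id \<noteq> fixpoint_count {0 :: nat} id"
    by (simp add: fixpoint_count_def)
qed

lemma has_separating_twist_Un:
  assumes tw1: "has_separating_twist U1 f" and tw2: "has_separating_twist U2 f"
    and cl1: "\<forall>a\<in>U1. f a \<in> U1" and cl2: "\<forall>a\<in>U2. f a \<in> U2" and disj: "U1 \<inter> U2 = {}"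
  shows "has_separating_twist (U1 \<union> U2) f"
proof -
  obtain B1 :: "nat set" and gB1 and C1 :: "nat set" and gC1 and h1 where
    B1: "is_fds B1 gB1" and C1: "is_fds C1 gC1" and h1: "twist U1 f B1 gB1 C1 gC1 h1"
    and ne1: "fixpoint_count B1 gB1 \<noteq> fixpoint_count C1 gC1"
    using tw1 unfolding has_separating_twist_def by blast
  obtain B2 :: "nat set" and gB2 and C2 :: "nat set" and gC2 and h2 where
    B2: "is_fds B2 gB2" and C2: "is_fds C2 gC2" and h2: "twist U2 f B2 gB2 C2 gC2 h2"
    and ne2: "fixpoint_count B2 gB2 \<noteq> fixpoint_count C2 gC2"
    using tw2 unfolding has_separating_twist_def by blast
  let ?B = "B1 \<times> B2 <+> C1 \<times> C2"
  let ?gB = "map_sum (map_prod gB1 gB2) (map_prod gC1 gC2)"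
  let ?C = "B1 \<times> C2 <+> C1 \<times> B2"
  let ?gC = "map_sum (map_prod gB1 gC2) (map_prod gC1 gB2)"
  have h1_inv: "twist U1 f C1 gC1 B1 gB1 (\<lambda>a. inv_into B1 (h1 a))"
    using twist_inv[OF h1 cl1] B1 by (simp add: is_fds_def)
  have h2_inv: "twist U2 f C2 gC2 B2 gB2 (\<lambda>a. inv_into B2 (h2 a))"
    using twist_inv[OF h2 cl2] B2 by (simp add: is_fds_def)
  \<comment> \<open>Over U1, h1 maps B1 B2 to C1 B2 and C1 C2 to B1 C2, so the summands must be swapped.\<close>
  note k1 = twist_comp[OF twist_sum[OF twist_prod_right[OF h1] twist_prod_right[OF h1_inv]] twist_sum_swap]
  note k2 = twist_sum[OF twist_prod_left[OF h2] twist_prod_left[OF h2_inv]]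
  have "fixpoint_count ?B ?gB \<noteq> fixpoint_count ?C ?gC"
    using B1 C1 B2 C2 add_mult_cross_neq[OF ne1 ne2]
    by (simp add: fixpoint_count_sum fixpoint_count_prod is_fds_def)
  then show ?thesis
    using has_separating_twistI[OF is_fds_sum[OF is_fds_prod[OF B1 B2] is_fds_prod[OF C1 C2]]
        is_fds_sum[OF is_fds_prod[OF B1 C2] is_fds_prod[OF C1 B2]] twist_Un[OF k1 k2 cl1 cl2 disj]]
    by blast
qed

lemma has_separating_twist_limit_cycle_basin:
  assumes U: "is_fds U f" and nofix: "\<forall>x\<in>U. f x \<noteq> x" and a: "a \<in> U"
  shows "has_separating_twist {x \<in> U. limit_cycle U f x = limit_cycle U f a} f"
proof (rule has_separating_twistI)
  let ?C = "limit_cycle U f a"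
  have cyc: "cyclic_on f ?C" using U a by (rule cyclic_on_limit_cycle)
  have sub: "?C \<subseteq> U" using U a by (rule limit_cycle_subset)
  have fin: "finite ?C" using cyc by (rule finite_cyclic_on)
  show "is_fds ?C f" using fin cyclic_on_inI[OF cyc] by (simp add: is_fds_def)
  show "is_fds {0..<card ?C} id" by (simp add: is_fds_def)
  show "twist {x \<in> U. limit_cycle U f x = ?C} f ?C f {0..<card ?C} id
      (\<lambda>x. funpow_dist f ((f ^^ card U) x))"
    using U a by (rule twist_limit_cycle_basin)
  have "?C \<noteq> {}" using cyc by (simp add: cyclic_on_alldef)
  then have "card ?C \<noteq> 0" using fin by simp
  moreover have "fixpoint_count {0..<card ?C} id = card ?C" by (simp add: fixpoint_count_def)
  moreover have "fixpoint_count ?C f = 0"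
  proof -
    have "{b \<in> ?C. f b = b} = {}" using sub nofix by blast
    then show ?thesis unfolding fixpoint_count_def by (simp only: card.empty)
  qed
  ultimately show "fixpoint_count ?C f \<noteq> fixpoint_count {0..<card ?C} id" by simp
qed

lemma has_separating_twist_if_no_fixpoint:
  assumes "is_fds U f" and "\<forall>x\<in>U. f x \<noteq> x"
  shows "has_separating_twist U f"
proof -
  have "finite U" using assms(1) by (simp add: is_fds_def)
  then show ?thesis using assms
  proof (induction U rule: finite_psubset_induct)
    case (psubset U)
    show ?case
    proof (cases "U = {}")
      case True
      then show ?thesis using has_separating_twist_empty by simp
    next
      case False
      then obtain a where a: "a \<in> U" by blast
      define W where "W = {x \<in> U. limit_cycle U f x = limit_cycle U f a}"
      have step: "f x \<in> U \<and> limit_cycle U f (f x) = limit_cycle U f x" if "x \<in> U" for x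
        using psubset.prems(1) that limit_cycle_step by (simp add: is_fds_def)
      have clW: "\<forall>x\<in>W. f x \<in> W" and clUW: "\<forall>x\<in>U - W. f x \<in> U - W"
        using step unfolding W_def by auto
      have "U - W \<subset> U" using a unfolding W_def by blast
      moreover have "is_fds (U - W) f" using psubset.prems(1) clUW by (simp add: is_fds_def)
      ultimately have "has_separating_twist (U - W) f" using psubset.IH psubset.prems(2) by blast
      moreover have "has_separating_twist W f"
        unfolding W_def using psubset.prems a by (rule has_separating_twist_limit_cycle_basin)
      ultimately have "has_separating_twist (W \<union> (U - W)) f"
        using has_separating_twist_Un clW clUW by blast
      moreover have "W \<union> (U - W) = U" unfolding W_def by blast
      ultimately show ?thesis by simp
    qed
  qed
qed

lemma not_cancellative_if_separating_twist:
  assumes "has_separating_twist S f"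
  shows "\<not> cancellative S f"
proof
  assume canc: "cancellative S f"
  obtain B :: "nat set" and gB and C :: "nat set" and gC and h where B: "is_fds B gB" and C: "is_fds C gC"
    and h: "twist S f B gB C gC h" and ne: "fixpoint_count B gB \<noteq> fixpoint_count C gC"
    using assms unfolding has_separating_twist_def by blast
  have "fds_iso (fds_prod_set S B) (fds_prod_fun f gB) (fds_prod_set S C) (fds_prod_fun f gC)"
    using fds_iso_prod_if_twist[OF h] by (simp add: fds_prod_set_def fds_prod_fun_eq_map_prod)
  then have "fds_iso B gB C gC" using canc B C unfolding cancellative_def by blast
  then show False using fixpoint_count_iso[OF B] ne by blast
qed

theorem mainTheorem1:
  fixes S :: "'a set" and f :: "'a \<Rightarrow> 'a"
  assumes "is_fds S f"
  shows "cancellative S f \<longleftrightarrow> (\<exists>s\<in>S. f s = s)"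
proof
  assume "cancellative S f"
  then show "\<exists>s\<in>S. f s = s"
    using has_separating_twist_if_no_fixpoint[OF assms] not_cancellative_if_separating_twist by blast
next
  assume "\<exists>s\<in>S. f s = s"
  then show "cancellative S f" using cancellative_if_fixpoint[OF assms] by blast
qed

end
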